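(* Let $J$ be a Jordan algebra with unit element $1$ over a field $F$ of characteristic $\neq 2,3$, and let $d$ be a derivation with invertible values of $J$. If $I$ is an ideal of $J$ with $I \subseteq \ker(d)$, then $I^2 = 0$.
   Context: A Jordan algebra is a commutative algebra satisfying $(x^2,y,x)=0$, where $(a,b,c)=(ab)c-a(bc)$. In a Jordan algebra $J$ with unit $1$, an element $x$ is invertible if there exists $y \in J$ with $xy = 1$ and $x^2 y = x$. A derivation with invertible values of $J$ is a nonzero derivation $d$ of $J$ such that for every $x \in J$, $d(x)$ is either invertible or equal to $0$. *)

theory Defs
  imports Complex_Main
begin

definition bilinear_mult :: "('a::field \<Rightarrow> 'v::ab_group_add \<Rightarrow> 'v) \<Rightarrow> ('v \<Rightarrow> 'v \<Rightarrow> 'v) \<Rightarrow> bool" where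
  "bilinear_mult scale mul \<longleftrightarrow>
     (\<forall>x y z. mul (x + y) z = mul x z + mul y z) \<and>
     (\<forall>x y z. mul x (y + z) = mul x y + mul x z) \<and>
     (\<forall>c x y. mul (scale c x) y = scale c (mul x y)) \<and>
     (\<forall>c x y. mul x (scale c y) = scale c (mul x y))"

definition assoc :: "('v \<Rightarrow> 'v \<Rightarrow> 'v) \<Rightarrow> 'v \<Rightarrow> 'v \<Rightarrow> 'v \<Rightarrow> 'v::ab_group_add" where
  "assoc mul a b c = mul (mul a b) c - mul a (mul b c)"

definition jordan_algebra :: "('a::field \<Rightarrow> 'v::ab_group_add \<Rightarrow> 'v) \<Rightarrow> ('v \<Rightarrow> 'v \<Rightarrow> 'v) \<Rightarrow> bool" where
  "jordan_algebra scale mul \<longleftrightarrow>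
     Vector_Spaces.vector_space scale \<and> bilinear_mult scale mul \<and>
     (\<forall>x y. mul x y = mul y x) \<and>
     (\<forall>x y. assoc mul (mul x x) y x = 0)"

definition is_unit_elem :: "('v \<Rightarrow> 'v \<Rightarrow> 'v) \<Rightarrow> 'v \<Rightarrow> bool" where
  "is_unit_elem mul e \<longleftrightarrow> (\<forall>x. mul e x = x \<and> mul x e = x)"

definition jinvertible :: "('v \<Rightarrow> 'v \<Rightarrow> 'v) \<Rightarrow> 'v \<Rightarrow> 'v \<Rightarrow> bool" where
  "jinvertible mul e x \<longleftrightarrow> (\<exists>y. mul x y = e \<and> mul (mul x x) y = x)"

definition is_derivation :: "('a::field \<Rightarrow> 'v::ab_group_add \<Rightarrow> 'v) \<Rightarrow> ('v \<Rightarrow> 'v \<Rightarrow> 'v) \<Rightarrow> ('v \<Rightarrow> 'v) \<Rightarrow> bool" where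
  "is_derivation scale mul d \<longleftrightarrow>
     Vector_Spaces.linear scale scale d \<and> (\<forall>x y. d (mul x y) = mul (d x) y + mul x (d y))"

definition derivation_invertible_values ::
  "('a::field \<Rightarrow> 'v::ab_group_add \<Rightarrow> 'v) \<Rightarrow> ('v \<Rightarrow> 'v \<Rightarrow> 'v) \<Rightarrow> 'v \<Rightarrow> ('v \<Rightarrow> 'v) \<Rightarrow> bool" where
  "derivation_invertible_values scale mul e d \<longleftrightarrow>
     is_derivation scale mul d \<and> d \<noteq> (\<lambda>x. 0) \<and>
     (\<forall>x. d x = 0 \<or> jinvertible mul e (d x))"

definition is_ideal :: "('a::field \<Rightarrow> 'v::ab_group_add \<Rightarrow> 'v) \<Rightarrow> ('v \<Rightarrow> 'v \<Rightarrow> 'v) \<Rightarrow> 'v set \<Rightarrow> bool" where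
  "is_ideal scale mul I \<longleftrightarrow> module.subspace scale I \<and>
     (\<forall>x a. a \<in> I \<longrightarrow> mul x a \<in> I \<and> mul a x \<in> I)"

definition ideal_sq :: "('a::field \<Rightarrow> 'v::ab_group_add \<Rightarrow> 'v) \<Rightarrow> ('v \<Rightarrow> 'v \<Rightarrow> 'v) \<Rightarrow> 'v set \<Rightarrow> 'v set" where
  "ideal_sq scale mul I = module.span scale {mul a b | a b. a \<in> I \<and> b \<in> I}"

end

theory Submission
  imports Defs
begin

text \<open>Fully linearizing the Jordan identity, which needs only characteristic \<noteq> 2, gives
  (xw,y,z) + (xz,y,w) + (wz,y,x) = 0. Let u = d t be a nonzero value of
  d, with uv = 1. Every a \<in> I annihilates u, since
  0 = d(at) = (da)t + a(dt) = au. For a, b \<in> I the linearized identity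
  with x = a, w = b, z = u, y = v collapses to ((ab)v)u = (ab)(vu) = ab;
  but (ab)v \<in> I annihilates u, so ab = 0.\<close>

lemma (in vector_space) double_eq_zero_imp_eq_zero:
  fixes v :: 'b
  assumes "(2::'a) \<noteq> 0" and "v + v = 0"
  shows "v = 0"
proof -
  have half: "(1/2 + 1/2 :: 'a) = 1"
    using assms(1) by (simp add: field_simps)
  have "v = scale (1/2 + 1/2) v"
    unfolding half by simp
  also have "\<dots> = scale (1/2) v + scale (1/2) v"
    by (rule scale_left_distrib)
  also have "\<dots> = scale (1/2) (v + v)"
    by (rule scale_right_distrib[symmetric])
  finally show ?thesis
    using assms(2) by simp
qed

locale comm_biadditive =
  fixes mul :: "'v::ab_group_add \<Rightarrow> 'v \<Rightarrow> 'v"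
  assumes mul_add_left: "mul (x + y) z = mul x z + mul y z"
    and mul_add_right: "mul x (y + z) = mul x y + mul x z"
    and mul_commute: "mul x y = mul y x"
begin

lemma mul_zero_left [simp]: "mul 0 z = 0"
  using mul_add_left[of 0 0 z] by simp

lemma mul_zero_right [simp]: "mul z 0 = 0"
  using mul_add_right[of z 0 0] by simp

lemma mul_minus_left [simp]: "mul (- x) z = - mul x z"
  using mul_add_left[of x "- x" z] by (simp add: minus_unique)

lemma mul_minus_right [simp]: "mul z (- x) = - mul z x"
  using mul_add_right[of z x "- x"] by (simp add: minus_unique)

lemma assoc_add_left: "assoc mul (a + a') b c = assoc mul a b c + assoc mul a' b c"
  unfolding assoc_def by (simp add: mul_add_left)

lemma assoc_add_right: "assoc mul a b (c + c') = assoc mul a b c + assoc mul a b c'"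
  unfolding assoc_def by (simp add: mul_add_right)

lemma assoc_minus_left: "assoc mul (- a) b c = - assoc mul a b c"
  unfolding assoc_def by simp

lemma assoc_minus_right: "assoc mul a b (- c) = - assoc mul a b c"
  unfolding assoc_def by simp

lemma assoc_zero_left [simp]: "assoc mul 0 b c = 0"
  unfolding assoc_def by simp

lemma mul_square_add: "mul (x + z) (x + z) = mul x x + mul x z + mul x z + mul z z"
  by (simp add: mul_add_left mul_add_right mul_commute[of z x])

end

locale jordan_ring = comm_biadditive mul for mul :: "'v::ab_group_add \<Rightarrow> 'v \<Rightarrow> 'v" +
  assumes jordan_identity: "assoc mul (mul x x) y x = 0"
    and double_eq_zero: "(v::'v) + v = 0 \<Longrightarrow> v = 0"
begin

lemma jordan_identity_mixed_terms:
  "assoc mul (mul x x) y z + assoc mul (mul x z) y x + assoc mul (mul x z) y x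
    + assoc mul (mul z z) y x + assoc mul (mul x z) y z + assoc mul (mul x z) y z = 0"
proof -
  have "assoc mul (mul (x + z) (x + z)) y (x + z)
      = (assoc mul (mul x x) y z + assoc mul (mul x z) y x + assoc mul (mul x z) y x
          + assoc mul (mul z z) y x + assoc mul (mul x z) y z + assoc mul (mul x z) y z)
        + (assoc mul (mul x x) y x + assoc mul (mul z z) y z)"
    by (simp only: mul_square_add assoc_add_left assoc_add_right) (simp add: add_ac)
  then show ?thesis
    by (simp add: jordan_identity)
qed

lemma jordan_identity_partial_linearization:
  "assoc mul (mul x x) y z + (assoc mul (mul x z) y x + assoc mul (mul x z) y x) = 0"
proof -
  let ?A = "assoc mul (mul x x) y z" and ?B = "assoc mul (mul x z) y x"
    and ?C = "assoc mul (mul z z) y x" and ?D = "assoc mul (mul x z) y z"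
  have plus: "?A + ?B + ?B + ?C + ?D + ?D = 0"
    by (rule jordan_identity_mixed_terms)
  have minus: "- ?A - ?B - ?B + ?C + ?D + ?D = 0"
    using jordan_identity_mixed_terms[of x y "- z"]
    by (simp add: assoc_minus_left assoc_minus_right)
  have "(?A + (?B + ?B)) + (?A + (?B + ?B)) = 0"
    using plus minus by (simp add: algebra_simps)
  then show ?thesis
    by (rule double_eq_zero)
qed

lemma jordan_identity_linearization:
  "assoc mul (mul x w) y z + assoc mul (mul x z) y w + assoc mul (mul w z) y x = 0"
proof -
  let ?L = "assoc mul (mul x w) y z + assoc mul (mul x z) y w + assoc mul (mul w z) y x"
  have "assoc mul (mul (x + w) (x + w)) y z
      + (assoc mul (mul (x + w) z) y (x + w) + assoc mul (mul (x + w) z) y (x + w))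
      = (assoc mul (mul x x) y z + (assoc mul (mul x z) y x + assoc mul (mul x z) y x))
        + (assoc mul (mul w w) y z + (assoc mul (mul w z) y w + assoc mul (mul w z) y w))
        + (?L + ?L)"
    unfolding mul_square_add
    by (simp only: mul_add_left assoc_add_left assoc_add_right) (simp add: add_ac)
  then have "?L + ?L = 0"
    by (simp add: jordan_identity_partial_linearization)
  then show ?thesis
    by (rule double_eq_zero)
qed

lemma product_of_annihilators:
  assumes "is_unit_elem mul e" and "mul v u = e" and "mul a u = 0" and "mul b u = 0"
  shows "mul a b = mul (mul (mul a b) v) u"
proof -
  have "assoc mul (mul a b) v u = 0"
    using jordan_identity_linearization[of a b v u] assms(3,4)
    by (simp add: mul_commute[of b a])
  then show ?thesis
    using assms(1,2) unfolding assoc_def is_unit_elem_def by simp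
qed

end

lemma jordan_ring_of_jordan_algebra:
  fixes scale :: "'a::field \<Rightarrow> 'v::ab_group_add \<Rightarrow> 'v"
  assumes "jordan_algebra scale mul" and "(2::'a) \<noteq> 0"
  shows "jordan_ring mul"
proof unfold_locales
  have bilinear: "bilinear_mult scale mul" and vs: "vector_space scale"
    using assms(1) by (simp_all add: jordan_algebra_def)
  show "mul (x + y) z = mul x z + mul y z" "mul x (y + z) = mul x y + mul x z" for x y z
    using bilinear by (simp_all add: bilinear_mult_def)
  show "mul x y = mul y x" "assoc mul (mul x x) y x = 0" for x y
    using assms(1) by (simp_all add: jordan_algebra_def)
  show "v = 0" if "v + v = 0" for v :: 'v
    using vector_space.double_eq_zero_imp_eq_zero[OF vs assms(2) that] .
qed

lemma (in comm_biadditive) kernel_ideal_annihilates_derivation_values: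
  assumes "is_derivation scale mul d" and "is_ideal scale mul I"
    and "I \<subseteq> {x. d x = 0}" and "a \<in> I"
  shows "mul a (d t) = 0"
proof -
  have "mul a t \<in> I"
    using assms(2,4) by (simp add: is_ideal_def)
  then have "mul (d a) t + mul a (d t) = 0"
    using assms(1,3) by (auto simp: is_derivation_def)
  moreover have "d a = 0"
    using assms(3,4) by auto
  ultimately show ?thesis by simp
qed

lemma (in vector_space) span_subset_zero: "S \<subseteq> {0} \<Longrightarrow> span S = {0}"
  by (metis span_empty span_minimal span_zero subspace_span subset_antisym
      empty_subsetI insert_subset)

theorem lemma3:
  fixes scale :: "'a::field \<Rightarrow> 'v::ab_group_add \<Rightarrow> 'v"
    and mul :: "'v \<Rightarrow> 'v \<Rightarrow> 'v"
    and e :: 'v and d :: "'v \<Rightarrow> 'v" and I :: "'v set"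
  assumes "jordan_algebra scale mul"
    and "is_unit_elem mul e"
    and "(2::'a) \<noteq> 0" and "(3::'a) \<noteq> 0"
    and "derivation_invertible_values scale mul e d"
    and "is_ideal scale mul I"
    and "I \<subseteq> {x. d x = 0}"
  shows "ideal_sq scale mul I = {0}"
proof -
  interpret jordan_ring mul
    using assms(1,3) by (rule jordan_ring_of_jordan_algebra)
  interpret vector_space scale
    using assms(1) by (simp add: jordan_algebra_def)
  have der: "is_derivation scale mul d"
    using assms(5) by (simp add: derivation_invertible_values_def)
  obtain t where "d t \<noteq> 0"
    using assms(5) by (auto simp: derivation_invertible_values_def)
  then obtain v where "mul (d t) v = e"
    using assms(5) by (auto simp: derivation_invertible_values_def jinvertible_def)
  then have inverse: "mul v (d t) = e"
    by (simp add: mul_commute)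
  note annihilates = kernel_ideal_annihilates_derivation_values[OF der assms(6,7)]
  have "mul a b = 0" if "a \<in> I" and "b \<in> I" for a b
  proof -
    have "mul a b = mul (mul (mul a b) v) (d t)"
      using product_of_annihilators[OF assms(2) inverse] annihilates that by blast
    also have "\<dots> = 0"
      using assms(6) that by (intro annihilates) (simp add: is_ideal_def)
    finally show ?thesis .
  qed
  then show ?thesis
    unfolding ideal_sq_def by (intro span_subset_zero) blast
qed

end
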